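(* Let $\mathrm y^\star\in\mathbb R^{d|\mathbb V|}$ and $\zeta^\star=\mathcal E^T\mathrm y^\star$, and suppose $\mathbf 0\in k^{-1}(\mathrm y^\star)+\mathcal E\gamma(\zeta^\star)$. Suppose further that for every $e\in\mathbb E$ the function $\Gamma_e$ is strictly convex on a neighborhood of $\zeta^\star_e$. Define $G:\mathrm{IM}(\mathcal E^T)\to\mathbb R\cup\{\pm\infty\}$ by $G(\zeta)=\inf\{K^\star(\mathrm y):\mathcal E^T\mathrm y=\zeta\}$. Then $\zeta^\star$ is the unique minimizer of $\Gamma(\zeta)+G(\zeta)$ over $\zeta\in\mathrm{IM}(\mathcal E^T)$.
   Context: $\mathcal G=(\mathbb V,\mathbb E)$ is a finite graph with arbitrarily oriented edges and incidence matrix $E$ ($E_{ik}=-1$, $E_{jk}=1$ for edge $k=(i,j)$, other entries of column $k$ zero); $d\ge1$, $\mathcal E=E\otimes I_d$, $\mathrm{IM}(\mathcal E^T)$ the image of $\mathcal E^T$. For each $i\in\mathbb V$, $k_i\subseteq\mathbb R^d\times\mathbb R^d$ (agent steady-state input-output relation) and for each $e\in\mathbb E$, $\gamma_e\subseteq\mathbb R^d\times\mathbb R^d$ (controller steady-state relation) are maximal cyclically monotone (a relation $R$ is cyclically monotone if $\sum_{i=1}^N y_i^T(u_i-u_{i-1})\ge0$ for all $N\ge1$ and $(u_1,y_1),\dots,(u_N,y_N)\in R$, $u_0=u_N$; maximal if not strictly contained in a larger such relation), so $k_i=\partial K_i$, $\gamma_e=\partial\Gamma_e$ for closed proper convex functions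 $K_i,\Gamma_e:\mathbb R^d\to\mathbb R\cup\{+\infty\}$. $k,\gamma$ are stacked relations, viewed as set-valued maps with $k^{-1}(\mathrm y)=\{\mathrm u:(\mathrm u,\mathrm y)\in k\}$, $\gamma(\zeta)=\{\mu:(\zeta,\mu)\in\gamma\}$. $K(\mathrm u)=\sum_iK_i(\mathrm u_i)$, $\Gamma(\zeta)=\sum_e\Gamma_e(\zeta_e)$, $K^\star(y)=\sup_u\{y^Tu-K(u)\}$. $\mathcal ES=\{\mathcal Es:s\in S\}$, $A+B$ Minkowski sum. *)

theory Defs
  imports "HOL-Analysis.Analysis"
begin

definition cyclically_monotone :: "('a::real_inner \<times> 'a) set \<Rightarrow> bool" where
  "cyclically_monotone R \<longleftrightarrow>
     (\<forall>(N::nat) (u::nat \<Rightarrow> 'a) (y::nat \<Rightarrow> 'a).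
        N \<ge> 1 \<longrightarrow> (\<forall>i\<in>{1..N}. (u i, y i) \<in> R) \<longrightarrow> u 0 = u N \<longrightarrow>
        0 \<le> (\<Sum>i=1..N. y i \<bullet> (u i - u (i - 1))))"

definition maximal_cyclically_monotone :: "('a::real_inner \<times> 'a) set \<Rightarrow> bool" where
  "maximal_cyclically_monotone R \<longleftrightarrow>
     cyclically_monotone R \<and>
     (\<forall>R'. cyclically_monotone R' \<longrightarrow> R \<subseteq> R' \<longrightarrow> R' = R)"

definition epigraph :: "('a \<Rightarrow> ereal) \<Rightarrow> ('a \<times> real) set" where
  "epigraph f = {(x, r). f x \<le> ereal r}"

definition closed_proper_convex :: "('a::real_normed_vector \<Rightarrow> ereal) \<Rightarrow> bool" where
  "closed_proper_convex f \<longleftrightarrow>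
     (\<exists>x. f x < \<infinity>) \<and> (\<forall>x. - \<infinity> < f x) \<and>
     convex (epigraph f) \<and> closed (epigraph f)"

definition subdiff_graph :: "('a::real_inner \<Rightarrow> ereal) \<Rightarrow> ('a \<times> 'a) set" where
  "subdiff_graph f =
     {(u, y). \<exists>c. f u = ereal c \<and> (\<forall>v. ereal (c + y \<bullet> (v - u)) \<le> f v)}"

definition strictly_convex_on_ereal :: "'a::real_vector set \<Rightarrow> ('a \<Rightarrow> ereal) \<Rightarrow> bool" where
  "strictly_convex_on_ereal S f \<longleftrightarrow>
     (\<forall>x\<in>S. \<forall>y\<in>S. \<forall>t::real. x \<noteq> y \<longrightarrow> 0 < t \<longrightarrow> t < 1 \<longrightarrow>
        f (t *\<^sub>R x + (1 - t) *\<^sub>R y) < ereal t * f x + ereal (1 - t) * f y)"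

text \<open>Action of \<E>^T = (E \<otimes> I_d)^T on stacked vertex vectors: edge e = (src e, tgt e)
  has column entries -1 at src e, +1 at tgt e.\<close>
definition incT :: "('e \<Rightarrow> 'v) \<Rightarrow> ('e \<Rightarrow> 'v) \<Rightarrow> ('v \<Rightarrow> 'a::ab_group_add) \<Rightarrow> ('e \<Rightarrow> 'a)" where
  "incT src tgt y = (\<lambda>e. y (tgt e) - y (src e))"

text \<open>Action of \<E> = E \<otimes> I_d on stacked edge vectors.\<close>
definition inc :: "('e::finite \<Rightarrow> 'v) \<Rightarrow> ('e \<Rightarrow> 'v) \<Rightarrow> ('e \<Rightarrow> 'a::ab_group_add) \<Rightarrow> ('v \<Rightarrow> 'a)" where
  "inc src tgt \<mu> = (\<lambda>i. (\<Sum>e\<in>{e. tgt e = i}. \<mu> e) - (\<Sum>e\<in>{e. src e = i}. \<mu> e))"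

definition conjK :: "('v::finite \<Rightarrow> 'a::real_inner \<Rightarrow> ereal) \<Rightarrow> ('v \<Rightarrow> 'a) \<Rightarrow> ereal" where
  "conjK K y = (SUP u. ereal (\<Sum>i\<in>UNIV. y i \<bullet> u i) - (\<Sum>i\<in>UNIV. K i (u i)))"

definition Gfun :: "('e \<Rightarrow> 'v::finite) \<Rightarrow> ('e \<Rightarrow> 'v) \<Rightarrow> ('v \<Rightarrow> 'a::real_inner \<Rightarrow> ereal)
                    \<Rightarrow> ('e \<Rightarrow> 'a) \<Rightarrow> ereal" where
  "Gfun src tgt K \<zeta> = (INF y\<in>{y. incT src tgt y = \<zeta>}. conjK K y)"

end

theory Submission imports Defs begin

text \<open>Pick a vertex subgradient pair (u, y*) \<in> \<partial>K and an edge multiplier \<mu> \<in> \<partial>\<Gamma>(\<zeta>*)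
  with u = -\<E>\<mu>. Since \<E> and \<E>^T are adjoint, the Fenchel--Young inequality gives
  G(\<zeta>) \<ge> -\<langle>\<mu>,\<zeta>\<rangle> - K(u) for every \<zeta>, with equality at \<zeta>* by the Fenchel--Young
  equality; the subgradient inequality gives \<Gamma>(\<zeta>) \<ge> \<Gamma>(\<zeta>*) + \<langle>\<mu>,\<zeta> - \<zeta>*\<rangle>.
  Adding, the \<zeta>-dependence cancels and \<zeta>* is a minimiser. At another minimiser
  every \<Gamma>_e coincides with its supporting affine function at \<zeta>_e, hence by convexity
  on the whole segment towards \<zeta>*_e, which strict convexity near \<zeta>*_e forbids.\<close>

lemma sum_fibres:
  fixes h :: "'e::finite \<Rightarrow> 'v::finite" and f :: "'e \<Rightarrow> 'v \<Rightarrow> 'b::comm_monoid_add"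
  shows "(\<Sum>i\<in>UNIV. \<Sum>e\<in>{e. h e = i}. f e i) = (\<Sum>e\<in>UNIV. f e (h e))"
proof -
  have "(\<Sum>i\<in>UNIV. \<Sum>e\<in>{e. h e = i}. f e i) = (\<Sum>i\<in>UNIV. \<Sum>e\<in>{e. e \<in> UNIV \<and> h e = i}. f e (h e))"
    by (intro sum.cong) auto
  also have "\<dots> = (\<Sum>e\<in>UNIV. f e (h e))"
    by (rule sum.group) auto
  finally show ?thesis .
qed

lemma inner_inc_eq_inner_incT:
  fixes src tgt :: "'e::finite \<Rightarrow> 'v::finite" and w :: "'v \<Rightarrow> 'a::real_inner"
  shows "(\<Sum>i\<in>UNIV. w i \<bullet> inc src tgt \<mu> i) = (\<Sum>e\<in>UNIV. \<mu> e \<bullet> incT src tgt w e)"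
proof -
  have "(\<Sum>i\<in>UNIV. w i \<bullet> inc src tgt \<mu> i)
     = (\<Sum>i\<in>UNIV. \<Sum>e\<in>{e. tgt e = i}. w i \<bullet> \<mu> e) - (\<Sum>i\<in>UNIV. \<Sum>e\<in>{e. src e = i}. w i \<bullet> \<mu> e)"
    by (simp add: inc_def inner_diff_right inner_sum_right sum_subtractf)
  also have "\<dots> = (\<Sum>e\<in>UNIV. w (tgt e) \<bullet> \<mu> e) - (\<Sum>e\<in>UNIV. w (src e) \<bullet> \<mu> e)"
    by (simp only: sum_fibres)
  also have "\<dots> = (\<Sum>e\<in>UNIV. \<mu> e \<bullet> incT src tgt w e)"
    by (simp add: incT_def inner_diff_right sum_subtractf inner_commute)
  finally show ?thesis .
qed

lemma ereal_add_le_imp_le_diff: "S + ereal r \<le> ereal s \<Longrightarrow> S \<le> ereal (s - r)"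
  by (cases S) auto

lemma sum_eq_if_ge_and_sum_le:
  fixes f :: "'e::finite \<Rightarrow> ereal" and g :: "'e \<Rightarrow> real"
  assumes ge: "\<And>e. ereal (g e) \<le> f e" and le: "(\<Sum>e\<in>UNIV. f e) \<le> ereal (\<Sum>e\<in>UNIV. g e)"
  shows "f e0 = ereal (g e0)"
proof -
  have "(\<Sum>e\<in>UNIV-{e0}. ereal (g e)) \<le> (\<Sum>e\<in>UNIV-{e0}. f e)"
    using ge by (intro sum_mono)
  then have "f e0 + ereal (\<Sum>e\<in>UNIV-{e0}. g e) \<le> (\<Sum>e\<in>UNIV. f e)"
    using sum.remove[of UNIV e0 f] by (simp add: add_left_mono)
  then have "f e0 \<le> ereal ((\<Sum>e\<in>UNIV. g e) - (\<Sum>e\<in>UNIV-{e0}. g e))"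
    using le by (intro ereal_add_le_imp_le_diff) (rule order_trans)
  also have "(\<Sum>e\<in>UNIV. g e) - (\<Sum>e\<in>UNIV-{e0}. g e) = g e0"
    using sum.remove[of UNIV e0 g] by simp
  finally show ?thesis using ge by (metis antisym)
qed

lemma subdiff_graph_familyE:
  assumes "\<And>e. (z e, \<mu> e) \<in> subdiff_graph (f e)"
  obtains c where "\<And>e. f e (z e) = ereal (c e)"
    and "\<And>e v. ereal (c e + \<mu> e \<bullet> (v - z e)) \<le> f e v"
proof -
  have "\<forall>e. \<exists>c. f e (z e) = ereal c \<and> (\<forall>v. ereal (c + \<mu> e \<bullet> (v - z e)) \<le> f e v)"
    using assms by (auto simp: subdiff_graph_def)
  then show thesis using that by metis
qed

lemma subdiff_graph_sumE:
  fixes f :: "'e::finite \<Rightarrow> 'a::real_inner \<Rightarrow> ereal"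
  assumes "\<And>e. (z e, \<mu> e) \<in> subdiff_graph (f e)"
  obtains a where "(\<Sum>e\<in>UNIV. f e (z e)) = ereal a"
    and "\<And>\<zeta>. ereal (a + (\<Sum>e\<in>UNIV. \<mu> e \<bullet> (\<zeta> e - z e))) \<le> (\<Sum>e\<in>UNIV. f e (\<zeta> e))"
proof -
  obtain c where c: "\<And>e. f e (z e) = ereal (c e)" "\<And>e v. ereal (c e + \<mu> e \<bullet> (v - z e)) \<le> f e v"
    by (metis assms subdiff_graph_familyE)
  have "(\<Sum>e\<in>UNIV. f e (z e)) = ereal (sum c UNIV)" by (simp add: c(1))
  moreover have "ereal (sum c UNIV + (\<Sum>e\<in>UNIV. \<mu> e \<bullet> (\<zeta> e - z e))) \<le> (\<Sum>e\<in>UNIV. f e (\<zeta> e))" for \<zeta>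
    using sum_mono[of UNIV "\<lambda>e. ereal (c e + \<mu> e \<bullet> (\<zeta> e - z e))", OF c(2)]
    by (simp add: sum.distrib)
  ultimately show thesis by (rule that)
qed

lemma opposite_affine_minorants:
  fixes f g :: "'x \<Rightarrow> ereal" and L :: "'x \<Rightarrow> real"
  assumes fz: "f z = ereal a" and f_ge: "\<And>x. ereal (a + L x) \<le> f x"
    and gz: "g z = ereal b" and g_ge: "\<And>x. ereal (b - L x) \<le> g x"
  shows "f z + g z \<le> f x + g x"
    and "f x + g x \<le> f z + g z \<Longrightarrow> f x = ereal (a + L x)"
proof -
  have "ereal (a + b) \<le> f x + g x"
    using add_mono[OF f_ge[of x] g_ge[of x]] by simp
  then show "f z + g z \<le> f x + g x" by (simp add: fz gz)
  assume "f x + g x \<le> f z + g z"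
  then have "f x + ereal (b - L x) \<le> ereal (a + b)"
    using add_left_mono[OF g_ge] fz gz by (metis order_trans plus_ereal.simps(1))
  then have "f x \<le> ereal (a + L x)"
    using ereal_add_le_imp_le_diff by fastforce
  then show "f x = ereal (a + L x)" using f_ge by (rule antisym)
qed

lemma subgradient_tight_on_segment:
  fixes f :: "'a::real_inner \<Rightarrow> ereal"
  assumes cpc: "closed_proper_convex f"
    and sub: "\<And>v. ereal (c + \<mu> \<bullet> (v - z)) \<le> f v"
    and fz: "f z = ereal c"
    and fx: "f x = ereal (c + \<mu> \<bullet> (x - z))"
    and t: "0 \<le> t" "t \<le> 1"
  shows "f (z + t *\<^sub>R (x - z)) = ereal (c + t * (\<mu> \<bullet> (x - z)))"
proof -
  have "convex (epigraph f)" using cpc by (simp add: closed_proper_convex_def)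
  moreover have "(x, c + \<mu> \<bullet> (x - z)) \<in> epigraph f" "(z, c) \<in> epigraph f"
    using fx fz by (auto simp: epigraph_def)
  ultimately have "t *\<^sub>R (x, c + \<mu> \<bullet> (x - z)) + (1 - t) *\<^sub>R (z, c) \<in> epigraph f"
    using t by (intro convexD) auto
  moreover have "t *\<^sub>R (x, c + \<mu> \<bullet> (x - z)) + (1 - t) *\<^sub>R (z, c)
      = (z + t *\<^sub>R (x - z), c + t * (\<mu> \<bullet> (x - z)))"
    by (simp add: algebra_simps)
  ultimately have "f (z + t *\<^sub>R (x - z)) \<le> ereal (c + t * (\<mu> \<bullet> (x - z)))"
    by (simp add: epigraph_def)
  moreover have "ereal (c + t * (\<mu> \<bullet> (x - z))) \<le> f (z + t *\<^sub>R (x - z))"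
    using sub[of "z + t *\<^sub>R (x - z)"] by simp
  ultimately show ?thesis by (rule antisym)
qed

lemma subgradient_tight_imp_eq_if_strictly_convex:
  fixes f :: "'a::real_inner \<Rightarrow> ereal"
  assumes cpc: "closed_proper_convex f"
    and sub: "\<And>v. ereal (c + \<mu> \<bullet> (v - z)) \<le> f v"
    and fz: "f z = ereal c"
    and fx: "f x = ereal (c + \<mu> \<bullet> (x - z))"
    and \<epsilon>: "\<epsilon> > 0" and strict: "strictly_convex_on_ereal (ball z \<epsilon>) f"
  shows "x = z"
proof (rule ccontr)
  assume "x \<noteq> z"
  define \<delta> where "\<delta> = x - z"
  define a where "a = \<mu> \<bullet> \<delta>"
  have n\<delta>: "norm \<delta> > 0" using \<open>x \<noteq> z\<close> by (simp add: \<delta>_def)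
  define s where "s = min 1 (\<epsilon> / (2 * norm \<delta>))"
  have s: "0 < s" "s \<le> 1" using n\<delta> \<epsilon> by (auto simp: s_def)
  have "s * norm \<delta> \<le> \<epsilon> / 2"
    using n\<delta> mult_right_mono[OF min.cobounded2[of 1 "\<epsilon> / (2 * norm \<delta>)"], of "norm \<delta>"]
    by (simp add: s_def)
  then have p_in: "z + s *\<^sub>R \<delta> \<in> ball z \<epsilon>" using \<epsilon> s by (simp add: dist_norm)
  have p_ne: "z + s *\<^sub>R \<delta> \<noteq> z" using s n\<delta> by simp
  have fp: "f (z + s *\<^sub>R \<delta>) = ereal (c + s * a)"
    and fm: "f (z + (s/2) *\<^sub>R \<delta>) = ereal (c + (s/2) * a)"
    using subgradient_tight_on_segment[OF cpc sub fz fx] s by (simp_all add: \<delta>_def a_def)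
  have "f ((1/2) *\<^sub>R (z + s *\<^sub>R \<delta>) + (1 - 1/2) *\<^sub>R z)
      < ereal (1/2) * f (z + s *\<^sub>R \<delta>) + ereal (1 - 1/2) * f z"
    using \<epsilon> by (intro strict[unfolded strictly_convex_on_ereal_def, rule_format, OF p_in _ p_ne]) auto
  moreover have "(1/2) *\<^sub>R (z + s *\<^sub>R \<delta>) + (1 - 1/2) *\<^sub>R z = z + (s/2) *\<^sub>R \<delta>"
    by (simp add: algebra_simps flip: scaleR_add_left)
  ultimately have "ereal (c + (s/2) * a) < ereal (1/2) * ereal (c + s * a) + ereal (1/2) * ereal c"
    using fp fm fz by simp
  then show False by (simp add: field_simps)
qed

lemma sum_subgradient_tight_imp_eq:
  fixes f :: "'e::finite \<Rightarrow> 'a::real_inner \<Rightarrow> ereal"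
  assumes cpc: "\<And>e. closed_proper_convex (f e)"
    and sub: "\<And>e. (z e, \<mu> e) \<in> subdiff_graph (f e)"
    and strict: "\<And>e. \<exists>\<epsilon>>0. strictly_convex_on_ereal (ball (z e) \<epsilon>) (f e)"
    and tight: "(\<Sum>e\<in>UNIV. f e (\<zeta> e)) \<le> (\<Sum>e\<in>UNIV. f e (z e)) + ereal (\<Sum>e\<in>UNIV. \<mu> e \<bullet> (\<zeta> e - z e))"
  shows "\<zeta> = z"
proof
  fix e
  obtain c where c: "\<And>e. f e (z e) = ereal (c e)" "\<And>e v. ereal (c e + \<mu> e \<bullet> (v - z e)) \<le> f e v"
    by (metis sub subdiff_graph_familyE)
  have "(\<Sum>e\<in>UNIV. f e (\<zeta> e)) \<le> ereal (\<Sum>e\<in>UNIV. c e + \<mu> e \<bullet> (\<zeta> e - z e))"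
    using tight by (simp add: c(1) sum.distrib)
  then have "f e (\<zeta> e) = ereal (c e + \<mu> e \<bullet> (\<zeta> e - z e))"
    by (intro sum_eq_if_ge_and_sum_le[where f = "\<lambda>e. f e (\<zeta> e)"] c(2))
  moreover obtain \<epsilon> where "\<epsilon> > 0" "strictly_convex_on_ereal (ball (z e) \<epsilon>) (f e)"
    using strict by blast
  ultimately show "\<zeta> e = z e"
    using subgradient_tight_imp_eq_if_strictly_convex[OF cpc c(2) c(1)] by blast
qed

lemma conjK_ge_pairing: "ereal (\<Sum>i\<in>UNIV. y i \<bullet> u i) - (\<Sum>i\<in>UNIV. K i (u i)) \<le> conjK K y"
  unfolding conjK_def by (rule SUP_upper) simp

lemma conjK_le_pairing_if_subgradient:
  assumes "\<And>i. (u i, y i) \<in> subdiff_graph (K i)"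
  shows "conjK K y \<le> ereal (\<Sum>i\<in>UNIV. y i \<bullet> u i) - (\<Sum>i\<in>UNIV. K i (u i))"
  unfolding conjK_def
proof (rule SUP_least)
  fix v
  obtain b where b: "\<And>i. K i (u i) = ereal (b i)" "\<And>i w. ereal (b i + y i \<bullet> (w - u i)) \<le> K i w"
    by (metis assms subdiff_graph_familyE)
  have "(\<Sum>i\<in>UNIV. ereal (b i + y i \<bullet> (v i - u i))) \<le> (\<Sum>i\<in>UNIV. K i (v i))"
    by (intro sum_mono b(2))
  then have "ereal ((\<Sum>i\<in>UNIV. y i \<bullet> v i) - ((\<Sum>i\<in>UNIV. y i \<bullet> u i) - (\<Sum>i\<in>UNIV. b i)))
      \<le> (\<Sum>i\<in>UNIV. K i (v i))"
    by (simp add: sum.distrib sum_subtractf algebra_simps)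
  then show "ereal (\<Sum>i\<in>UNIV. y i \<bullet> v i) - (\<Sum>i\<in>UNIV. K i (v i))
      \<le> ereal (\<Sum>i\<in>UNIV. y i \<bullet> u i) - (\<Sum>i\<in>UNIV. K i (u i))"
    by (cases "\<Sum>i\<in>UNIV. K i (v i)") (auto simp: b(1))
qed

lemma Gfun_ge_multiplier:
  assumes "\<And>i. u i = - inc src tgt \<mu> i"
  shows "ereal (- (\<Sum>e\<in>UNIV. \<mu> e \<bullet> \<zeta> e)) - (\<Sum>i\<in>UNIV. K i (u i)) \<le> Gfun src tgt K \<zeta>"
  unfolding Gfun_def
proof (rule INF_greatest)
  fix y assume "y \<in> {y. incT src tgt y = \<zeta>}"
  then have "(\<Sum>i\<in>UNIV. y i \<bullet> u i) = - (\<Sum>e\<in>UNIV. \<mu> e \<bullet> \<zeta> e)"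
    by (simp add: assms sum_negf inner_inc_eq_inner_incT)
  then show "ereal (- (\<Sum>e\<in>UNIV. \<mu> e \<bullet> \<zeta> e)) - (\<Sum>i\<in>UNIV. K i (u i)) \<le> conjK K y"
    using conjK_ge_pairing[of y u K] by simp
qed

lemma Gfun_le_if_subgradient:
  assumes "\<And>i. u i = - inc src tgt \<mu> i" and "\<And>i. (u i, y i) \<in> subdiff_graph (K i)"
  shows "Gfun src tgt K (incT src tgt y)
    \<le> ereal (- (\<Sum>e\<in>UNIV. \<mu> e \<bullet> incT src tgt y e)) - (\<Sum>i\<in>UNIV. K i (u i))"
proof -
  have "Gfun src tgt K (incT src tgt y) \<le> conjK K y"
    unfolding Gfun_def by (rule INF_lower) simp
  also have "\<dots> \<le> ereal (\<Sum>i\<in>UNIV. y i \<bullet> u i) - (\<Sum>i\<in>UNIV. K i (u i))"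
    by (rule conjK_le_pairing_if_subgradient[OF assms(2)])
  finally show ?thesis
    by (simp add: assms(1) sum_negf inner_inc_eq_inner_incT)
qed

lemma Gfun_subgradientE:
  assumes u: "\<And>i. u i = - inc src tgt \<mu> i" and uy: "\<And>i. (u i, y i) \<in> subdiff_graph (K i)"
  obtains b where "Gfun src tgt K (incT src tgt y) = ereal b"
    and "\<And>\<zeta>. ereal (b - (\<Sum>e\<in>UNIV. \<mu> e \<bullet> (\<zeta> e - incT src tgt y e))) \<le> Gfun src tgt K \<zeta>"
proof -
  define P where "P \<zeta> = (\<Sum>e\<in>UNIV. \<mu> e \<bullet> \<zeta> e)" for \<zeta>
  obtain c where "\<And>i. K i (u i) = ereal (c i)" by (metis uy subdiff_graph_familyE)
  then have Ku: "(\<Sum>i\<in>UNIV. K i (u i)) = ereal (sum c UNIV)" by simp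
  define b where "b = - P (incT src tgt y) - sum c UNIV"
  have ge: "ereal (b - (\<Sum>e\<in>UNIV. \<mu> e \<bullet> (\<zeta> e - incT src tgt y e))) \<le> Gfun src tgt K \<zeta>" for \<zeta>
  proof -
    have "b - (\<Sum>e\<in>UNIV. \<mu> e \<bullet> (\<zeta> e - incT src tgt y e)) = - P \<zeta> - sum c UNIV"
      by (simp add: b_def P_def inner_diff_right sum_subtractf)
    then show ?thesis
      using Gfun_ge_multiplier[OF u, where K = K and \<zeta> = \<zeta>] by (simp add: Ku P_def)
  qed
  have "Gfun src tgt K (incT src tgt y) \<le> ereal b"
    using Gfun_le_if_subgradient[where K = K, OF u uy] by (simp add: Ku b_def P_def)
  with ge[of "incT src tgt y"] have "Gfun src tgt K (incT src tgt y) = ereal b" by simp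
  then show thesis using ge by (rule that)
qed

theorem mainTheorem8:
  fixes src tgt :: "'e::finite \<Rightarrow> 'v::finite"
    and k :: "'v \<Rightarrow> ((real^'d) \<times> (real^'d)) set"
    and gam :: "'e \<Rightarrow> ((real^'d) \<times> (real^'d)) set"
    and K :: "'v \<Rightarrow> real^'d \<Rightarrow> ereal"
    and Gam :: "'e \<Rightarrow> real^'d \<Rightarrow> ereal"
    and ystar :: "'v \<Rightarrow> real^'d"
    and zstar :: "'e \<Rightarrow> real^'d"
  assumes k_max: "\<forall>i. maximal_cyclically_monotone (k i)"
    and gam_max: "\<forall>e. maximal_cyclically_monotone (gam e)"
    and K_cpc: "\<forall>i. closed_proper_convex (K i)"
    and Gam_cpc: "\<forall>e. closed_proper_convex (Gam e)"
    and k_sub: "\<forall>i. k i = subdiff_graph (K i)"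
    and gam_sub: "\<forall>e. gam e = subdiff_graph (Gam e)"
    and zstar_def: "zstar = incT src tgt ystar"
    and zero_in: "\<exists>u \<mu>. (\<forall>i. (u i, ystar i) \<in> k i) \<and> (\<forall>e. (zstar e, \<mu> e) \<in> gam e) \<and>
                        (\<forall>i. u i + inc src tgt \<mu> i = 0)"
    and strict: "\<forall>e. \<exists>\<epsilon>>0. strictly_convex_on_ereal (ball (zstar e) \<epsilon>) (Gam e)"
  shows "zstar \<in> range (incT src tgt) \<and>
         (\<forall>\<zeta>\<in>range (incT src tgt).
            (\<Sum>e\<in>UNIV. Gam e (zstar e)) + Gfun src tgt K zstar
              \<le> (\<Sum>e\<in>UNIV. Gam e (\<zeta> e)) + Gfun src tgt K \<zeta>) \<and>
         (\<forall>\<zeta>\<in>range (incT src tgt).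
            (\<Sum>e\<in>UNIV. Gam e (\<zeta> e)) + Gfun src tgt K \<zeta>
              \<le> (\<Sum>e\<in>UNIV. Gam e (zstar e)) + Gfun src tgt K zstar \<longrightarrow> \<zeta> = zstar)"
proof -
  obtain u \<mu> where uy: "\<And>i. (u i, ystar i) \<in> subdiff_graph (K i)"
    and z\<mu>: "\<And>e. (zstar e, \<mu> e) \<in> subdiff_graph (Gam e)"
    and "\<And>i. u i + inc src tgt \<mu> i = 0"
    using zero_in k_sub gam_sub by auto
  then have u: "\<And>i. u i = - inc src tgt \<mu> i"
    by (simp add: eq_neg_iff_add_eq_0)
  obtain a where Gam_z: "(\<Sum>e\<in>UNIV. Gam e (zstar e)) = ereal a"
    and Gam_ge: "\<And>\<zeta>. ereal (a + (\<Sum>e\<in>UNIV. \<mu> e \<bullet> (\<zeta> e - zstar e))) \<le> (\<Sum>e\<in>UNIV. Gam e (\<zeta> e))"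
    using subdiff_graph_sumE[where f = Gam, OF z\<mu>] by blast
  obtain b where G_z: "Gfun src tgt K zstar = ereal b"
    and G_ge: "\<And>\<zeta>. ereal (b - (\<Sum>e\<in>UNIV. \<mu> e \<bullet> (\<zeta> e - zstar e))) \<le> Gfun src tgt K \<zeta>"
    using Gfun_subgradientE[where K = K, OF u uy] unfolding zstar_def by blast
  note minimal = opposite_affine_minorants
    [where f = "\<lambda>\<zeta>. \<Sum>e\<in>UNIV. Gam e (\<zeta> e)" and g = "Gfun src tgt K", OF Gam_z Gam_ge G_z G_ge]
  have "\<zeta> = zstar" if "(\<Sum>e\<in>UNIV. Gam e (\<zeta> e)) + Gfun src tgt K \<zeta>
      \<le> (\<Sum>e\<in>UNIV. Gam e (zstar e)) + Gfun src tgt K zstar" for \<zeta>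
    using sum_subgradient_tight_imp_eq[where f = Gam, OF _ z\<mu>] minimal(2)[OF that] Gam_z Gam_cpc strict
    by simp
  then show ?thesis
    using minimal(1) zstar_def by blast
qed

end
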